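(* Let $p$ be a prime, $n = ms$, and $B \in \mathbb{Z}_p^{n\times n}$ nonsingular, and let $u\in\mathbb{Z}_p^{s\times n}$, $v\in\mathbb{Z}_p^{n\times s}$ be such that $U$ (block rows $u, uB, \dots, uB^{m-1}$) and $V = [v \mid Bv\mid\cdots\mid B^{m-1}v]$ are nonsingular, and let $H = UBV$. Suppose: (i) for any $w \in \mathbb{Z}_p^{n}$ the product $Bw$ can be computed with $\mu(n)$ operations in $\mathbb{Z}_p$; (ii) for any $w\in\mathbb{Z}_p^n$ and $x \in \mathbb{Z}_p^{s}$ the products $uw$ and $vx$ can be computed with $\tilde O(n)$ operations in $\mathbb{Z}_p$; (iii) a representation of $H^{-1}$ has been precomputed which allows $H^{-1}y$ to be computed for any $y \in \mathbb{Z}_p^n$ with $\tilde O(ns)$ operations in $\mathbb{Z}_p$. Then for any $w \in \mathbb{Z}_p^{n}$, the vector $B^{-1}w$ can be computed with $2(m-1)\mu(n) + \tilde O(n(m+s))$ operations in $\mathbb{Z}_p$.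
   Context: $\tilde O(f)$ denotes $O(f \cdot (\log f)^{c})$ for some constant $c$, i.e. big-O up to polylogarithmic factors. *)

theory Defs
  imports "Jordan_Normal_Form.Determinant" "HOL-Computational_Algebra.Primes"
begin

text \<open>Arithmetic over Z_p is modelled on integers with reduction mod p.
  Algorithms are straight-line programs over Z_p with black-box bbox calls
  (B, u, v and the precomputed representation of H inverse).  The store is a
  list of field elements; the input vector w occupies the first n cells.\<close>

datatype instr =
    Cst int | Add nat nat | Sub nat nat | Mul nat nat | Dv nat nat
  | CallB "nat list" | CallU "nat list" | CallV "nat list" | CallH "nat list"

type_synonym bbox = "int list \<Rightarrow> int list"

type_synonym prog = "instr list \<times> nat list"

definition fetch :: "int list \<Rightarrow> nat \<Rightarrow> int" where
  "fetch st i = (if i < length st then st ! i else 0)"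

fun step :: "int \<Rightarrow> bbox \<Rightarrow> bbox \<Rightarrow> bbox \<Rightarrow> bbox \<Rightarrow> int list \<Rightarrow> instr \<Rightarrow> int list" where
  "step p oB oU oV oH st (Cst c) = st @ [c mod p]"
| "step p oB oU oV oH st (Add i j) = st @ [(fetch st i + fetch st j) mod p]"
| "step p oB oU oV oH st (Sub i j) = st @ [(fetch st i - fetch st j) mod p]"
| "step p oB oU oV oH st (Mul i j) = st @ [(fetch st i * fetch st j) mod p]"
| "step p oB oU oV oH st (Dv i j) = st @ [(fetch st i * fetch st j ^ (nat p - 2)) mod p]"
| "step p oB oU oV oH st (CallB is) = st @ oB (map (fetch st) is)"
| "step p oB oU oV oH st (CallU is) = st @ oU (map (fetch st) is)"
| "step p oB oU oV oH st (CallV is) = st @ oV (map (fetch st) is)"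
| "step p oB oU oV oH st (CallH is) = st @ oH (map (fetch st) is)"

definition run :: "int \<Rightarrow> bbox \<Rightarrow> bbox \<Rightarrow> bbox \<Rightarrow> bbox \<Rightarrow> prog \<Rightarrow> int list \<Rightarrow> int list" where
  "run p oB oU oV oH P w =
     (let st = fold (\<lambda>ins st. step p oB oU oV oH st ins) (fst P) w
      in map (fetch st) (snd P))"

fun icost :: "real \<Rightarrow> real \<Rightarrow> real \<Rightarrow> real \<Rightarrow> instr \<Rightarrow> real" where
  "icost mu cU cV cH (CallB _) = mu"
| "icost mu cU cV cH (CallU _) = cU"
| "icost mu cU cV cH (CallV _) = cV"
| "icost mu cU cV cH (CallH _) = cH"
| "icost mu cU cV cH _ = 1"

definition cost :: "real \<Rightarrow> real \<Rightarrow> real \<Rightarrow> real \<Rightarrow> prog \<Rightarrow> real" where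
  "cost mu cU cV cH P = sum_list (map (icost mu cU cV cH) (fst P))"

definition in_range :: "int \<Rightarrow> int list \<Rightarrow> bool" where
  "in_range p xs \<longleftrightarrow> (\<forall>x\<in>set xs. 0 \<le> x \<and> x < p)"

definition mvp :: "int \<Rightarrow> int mat \<Rightarrow> int list \<Rightarrow> int list" where
  "mvp p A x = list_of_vec (map_vec (\<lambda>a. a mod p) (A *\<^sub>v vec_of_list x))"

definition nonsingular_modp :: "int \<Rightarrow> int mat \<Rightarrow> bool" where
  "nonsingular_modp p A \<longleftrightarrow> det A mod p \<noteq> 0"

text \<open>U has block rows u, uB, ..., uB^(m-1); V = [v | Bv | ... | B^(m-1) v].\<close>
definition blockU :: "nat \<Rightarrow> nat \<Rightarrow> int mat \<Rightarrow> int mat \<Rightarrow> int mat" where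
  "blockU m s B u = mat (m * s) (dim_col u) (\<lambda>(i, j). (u * B ^\<^sub>m (i div s)) $$ (i mod s, j))"

definition blockV :: "nat \<Rightarrow> nat \<Rightarrow> int mat \<Rightarrow> int mat \<Rightarrow> int mat" where
  "blockV m s B v = mat (dim_row v) (m * s) (\<lambda>(i, j). (B ^\<^sub>m (j div s) * v) $$ (i, j mod s))"

text \<open>Soft-O shape: x * (log x)^K, with +2 to keep the logarithm positive.\<close>
definition otil :: "nat \<Rightarrow> nat \<Rightarrow> real" where
  "otil K x = real x * (log 2 (real x + 2)) ^ K"

end

theory Submission
  imports Defs
begin

(* With H = U B V, the vector x = V H^-1 U w satisfies U B x = U w, and since U is invertible
   modulo p this forces B x = w.  The blocks of U w
   are u B^j w, read off from the Krylov vectors w, B w, ..., B^(m-1) w (m - 1 calls of B).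
   Splitting z = H^-1 U w into blocks z_0, ..., z_(m-1) of length s,
   V z = v z_0 + B (v z_1 + B (... + B (v z_(m-1)))), which Horner's rule evaluates with m - 1
   further calls of B and (m - 1) n additions; the m calls each of u and v and the single call
   of H^-1 cost O~(n (m + s)). *)

section \<open>Matrix-vector products modulo p\<close>

definition vec_mod :: "int \<Rightarrow> int vec \<Rightarrow> int vec" where
  "vec_mod p x = map_vec (\<lambda>a. a mod p) x"

lemma scalar_prod_vec_mod_mod:
  assumes "dim_vec y = dim_vec x"
  shows "(y \<bullet> vec_mod p x) mod p = (y \<bullet> x) mod p"
proof -
  have "(y \<bullet> vec_mod p x) mod p = (\<Sum>i<dim_vec x. (y $ i * (x $ i mod p)) mod p) mod p"
    using assms by (simp add: scalar_prod_def vec_mod_def mod_sum_eq atLeast0LessThan)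
  also have "\<dots> = (\<Sum>i<dim_vec x. (y $ i * x $ i) mod p) mod p"
    by (simp add: mod_mult_right_eq)
  also have "\<dots> = (y \<bullet> x) mod p"
    using assms by (simp add: mod_sum_eq scalar_prod_def atLeast0LessThan)
  finally show ?thesis .
qed

lemma vec_mod_mult_mat_vec_mod:
  assumes "A \<in> carrier_mat k l" "dim_vec x = l"
  shows "vec_mod p (A *\<^sub>v vec_mod p x) = vec_mod p (A *\<^sub>v x)"
  using assms scalar_prod_vec_mod_mod[of "row A _" x p]
  by (intro eq_vecI) (auto simp: vec_mod_def)

lemma mvp_conv_vec_mod: "mvp p A x = list_of_vec (vec_mod p (A *\<^sub>v vec_of_list x))"
  by (simp add: mvp_def vec_mod_def)

lemma length_mvp[simp]: "length (mvp p A x) = dim_row A"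
  by (simp add: mvp_def)

lemma nth_mvp: "i < dim_row A \<Longrightarrow> mvp p A x ! i = (row A i \<bullet> vec_of_list x) mod p"
  by (simp add: mvp_def list_of_vec_index)

lemma in_range_mvp: "0 < p \<Longrightarrow> in_range p (mvp p A x)"
  by (auto simp: in_range_def mvp_def in_set_conv_nth list_of_vec_index)

lemma mvp_mvp:
  assumes A: "A \<in> carrier_mat k l" and B: "B \<in> carrier_mat l r" and x: "length x = r"
  shows "mvp p A (mvp p B x) = mvp p (A * B) x"
proof -
  have "vec_of_list x \<in> carrier_vec r" using x by (intro carrier_vecI) simp
  then have "A *\<^sub>v (B *\<^sub>v vec_of_list x) = (A * B) *\<^sub>v vec_of_list x"
    using A B by simp
  moreover have "dim_vec (B *\<^sub>v vec_of_list x) = l" using B by simp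
  ultimately show ?thesis
    using vec_mod_mult_mat_vec_mod[OF A] by (simp add: mvp_conv_vec_mod vec_list)
qed

lemma mvp_one_mat:
  assumes "in_range p w"
  shows "mvp p (1\<^sub>m (length w)) w = w"
proof -
  have "vec_of_list w \<in> carrier_vec (length w)" by (intro carrier_vecI) simp
  moreover have "vec_mod p (vec_of_list w) = vec_of_list w"
    using assms by (auto simp: vec_mod_def in_range_def vec_of_list_index intro!: eq_vecI)
  ultimately show ?thesis by (simp add: mvp_conv_vec_mod list_vec)
qed

lemma mvp_cancel_nonsingular:
  assumes p: "prime p" and U: "U \<in> carrier_mat n n" and nonsing: "nonsingular_modp p U"
    and x: "length x = n" "in_range p x" and y: "length y = n" "in_range p y"
    and eq: "mvp p U x = mvp p U y"
  shows "x = y"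
proof (rule nth_equalityI)
  show "length x = length y" using x y by simp
  fix i assume "i < length x"
  then have i: "i < n" using x by simp
  have adj: "adj_mat U \<in> carrier_mat n n" "adj_mat U * U = det U \<cdot>\<^sub>m 1\<^sub>m n"
    using adj_mat[OF U] by auto
  have det_mvp: "mvp p (det U \<cdot>\<^sub>m 1\<^sub>m n) a ! i = (det U * a ! i) mod p" if "length a = n" for a
  proof -
    have "vec_of_list a \<in> carrier_vec n" using that by (intro carrier_vecI) simp
    then show ?thesis using i that by (simp add: nth_mvp scalar_prod_left_unit vec_of_list_index)
  qed
  have "mvp p (det U \<cdot>\<^sub>m 1\<^sub>m n) x = mvp p (det U \<cdot>\<^sub>m 1\<^sub>m n) y"
    using mvp_mvp[OF adj(1) U x(1), of p] mvp_mvp[OF adj(1) U y(1), of p] eq adj(2) by simp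
  then have "(det U * x ! i) mod p = (det U * y ! i) mod p"
    using det_mvp x(1) y(1) by metis
  then have "p dvd det U * (x ! i - y ! i)"
    by (simp add: mod_eq_dvd_iff right_diff_distrib)
  moreover have "\<not> p dvd det U" using nonsing by (simp add: nonsingular_modp_def dvd_eq_mod_eq_0)
  ultimately have "x ! i mod p = y ! i mod p"
    using p by (simp add: prime_dvd_mult_iff mod_eq_dvd_iff)
  moreover have "x ! i mod p = x ! i" "y ! i mod p = y ! i"
    using x y i by (auto simp: in_range_def)
  ultimately show "x ! i = y ! i" by simp
qed

lemma mvp_solution_of_UBV:
  assumes p: "prime p" and U: "U \<in> carrier_mat n n" "nonsingular_modp p U"
    and B: "B \<in> carrier_mat n n" and V: "V \<in> carrier_mat n n"
    and z: "length z = n" and w: "length w = n" "in_range p w"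
    and H: "mvp p (U * B * V) z = mvp p U w"
  shows "mvp p B (mvp p V z) = w"
proof -
  have BV: "mvp p B (mvp p V z) = mvp p (B * V) z" by (rule mvp_mvp[OF B V z])
  have "mvp p U (mvp p (B * V) z) = mvp p (U * B * V) z"
    using mvp_mvp[OF U(1) _ z, of "B * V" p] U(1) B V by (simp add: assoc_mult_mat)
  with H have "mvp p U (mvp p (B * V) z) = mvp p U w" by simp
  moreover have "0 < p" using p by (simp add: prime_gt_0_int)
  then have "in_range p (mvp p (B * V) z)" by (rule in_range_mvp)
  moreover have "length (mvp p (B * V) z) = n" using B V by simp
  ultimately show ?thesis
    unfolding BV using mvp_cancel_nonsingular[OF p U _ _ w] by blast
qed

section \<open>The block matrices U and V\<close>

lemma pow_mat_Suc_left:
  assumes "B \<in> carrier_mat n n"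
  shows "B * B ^\<^sub>m k = B ^\<^sub>m Suc k"
proof (induction k)
  case 0
  then show ?case using assms by simp
next
  case (Suc k)
  have "B * B ^\<^sub>m Suc k = (B * B ^\<^sub>m k) * B"
    using assms by (simp add: assoc_mult_mat[symmetric, of B n n _ n B n])
  then show ?case using Suc by simp
qed

lemma length_concat_map_upt_const:
  assumes "\<And>j. j < T \<Longrightarrow> length (f j) = n"
  shows "length (concat (map f [0..<T])) = n * T"
proof -
  have "length (concat (map f [0..<T])) = (\<Sum>j\<leftarrow>[0..<T]. n)"
    unfolding length_concat map_map o_def using assms
    by (intro arg_cong[where f = sum_list] map_cong) auto
  then show ?thesis by (simp add: sum_list_triv)
qed

lemma concat_map_upt_split:
  assumes "j < T"
  shows "concat (map f [0..<T]) = concat (map f [0..<j]) @ f j @ concat (map f [Suc j..<T])"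
proof -
  have "[0..<T] = [0..<j] @ [j..<T]" using assms upt_add_eq_append[of 0 j "T - j"] by simp
  also have "[j..<T] = j # [Suc j..<T]" using assms by (rule upt_conv_Cons)
  finally show ?thesis by simp
qed

lemma nth_concat_map_upt_const:
  assumes "\<And>j. j < T \<Longrightarrow> length (f j) = n" and "j < T" "i < n"
  shows "concat (map f [0..<T]) ! (n * j + i) = f j ! i"
  using concat_map_upt_split[OF assms(2), of f] assms
    length_concat_map_upt_const[of j f n]
  by (simp add: nth_append)

lemma take_drop_concat_map_upt_const:
  assumes "\<And>j. j < T \<Longrightarrow> length (f j) = n" and "j < T"
  shows "take n (drop (n * j) (concat (map f [0..<T]))) = f j"
  using concat_map_upt_split[OF assms(2), of f] assms
    length_concat_map_upt_const[of j f n]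
  by simp

lemma dim_blockU[simp]: "dim_row (blockU m s B u) = m * s" "dim_col (blockU m s B u) = dim_col u"
  by (simp_all add: blockU_def)

lemma dim_blockV[simp]: "dim_row (blockV m s B v) = dim_row v" "dim_col (blockV m s B v) = m * s"
  by (simp_all add: blockV_def)

lemma blockU_carrier: "u \<in> carrier_mat s n \<Longrightarrow> blockU m s B u \<in> carrier_mat (m * s) n"
  by (auto simp: blockU_def)

lemma blockV_carrier: "v \<in> carrier_mat n s \<Longrightarrow> blockV m s B v \<in> carrier_mat n (m * s)"
  by (auto simp: blockV_def)

lemma blockV_1: "B \<in> carrier_mat n n \<Longrightarrow> v \<in> carrier_mat n s \<Longrightarrow> blockV 1 s B v = v"
  by (intro eq_matI) (auto simp: blockV_def)

lemma mvp_blockU: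
  assumes B: "B \<in> carrier_mat n n" and u: "u \<in> carrier_mat s n"
  shows "concat (map (\<lambda>j. mvp p (u * B ^\<^sub>m j) w) [0..<m]) = mvp p (blockU m s B u) w"
proof (rule nth_equalityI)
  have len: "\<And>j. j < m \<Longrightarrow> length (mvp p (u * B ^\<^sub>m j) w) = s" using u by simp
  then show "length (concat (map (\<lambda>j. mvp p (u * B ^\<^sub>m j) w) [0..<m])) =
      length (mvp p (blockU m s B u) w)"
    using length_concat_map_upt_const[OF len] by (simp add: mult.commute)
  fix i assume "i < length (concat (map (\<lambda>j. mvp p (u * B ^\<^sub>m j) w) [0..<m]))"
  then have i: "i < m * s" using length_concat_map_upt_const[OF len] by (simp add: mult.commute)
  then have "s > 0" by (cases s) auto
  define j r where "j = i div s" and "r = i mod s"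
  have ij: "i = s * j + r" and r: "r < s" and j: "j < m"
    using i \<open>s > 0\<close> by (auto simp: j_def r_def less_mult_imp_div_less mult.commute)
  have "row (u * B ^\<^sub>m j) r = row (blockU m s B u) i"
    using u B i r by (intro eq_vecI) (auto simp: blockU_def j_def r_def)
  moreover have "concat (map (\<lambda>j. mvp p (u * B ^\<^sub>m j) w) [0..<m]) ! i = mvp p (u * B ^\<^sub>m j) w ! r"
    unfolding ij by (rule nth_concat_map_upt_const[OF len j r])
  ultimately show "concat (map (\<lambda>j. mvp p (u * B ^\<^sub>m j) w) [0..<m]) ! i = mvp p (blockU m s B u) w ! i"
    using u r i by (simp add: nth_mvp)
qed

lemma blockV_Suc_shift:
  assumes B: "B \<in> carrier_mat n n" and v: "v \<in> carrier_mat n s" and i: "i < n" and c: "c < k * s"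
  shows "blockV (Suc k) s B v $$ (i, c + s) = (B * blockV k s B v) $$ (i, c)"
proof -
  have "s > 0" using c by (cases s) auto
  define q r where "q = c div s" and "r = c mod s"
  have r: "r < s" using \<open>s > 0\<close> by (simp add: r_def)
  have "blockV (Suc k) s B v $$ (i, c + s) = (B ^\<^sub>m Suc q * v) $$ (i, r)"
    using i c v \<open>s > 0\<close> by (simp add: blockV_def q_def r_def)
  also have "B ^\<^sub>m Suc q * v = B * (B ^\<^sub>m q * v)"
    using pow_mat_Suc_left[OF B, of q] B v by (metis assoc_mult_mat pow_carrier_mat)
  also have "col (B ^\<^sub>m q * v) r = col (blockV k s B v) c"
    using B v c r by (intro eq_vecI) (auto simp: blockV_def q_def r_def)
  then have "(B * (B ^\<^sub>m q * v)) $$ (i, r) = (B * blockV k s B v) $$ (i, c)"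
    using B v i r c by simp
  finally show ?thesis .
qed

lemma mult_blockV_Suc:
  assumes B: "B \<in> carrier_mat n n" and v: "v \<in> carrier_mat n s" and z: "length z = Suc k * s"
  shows "blockV (Suc k) s B v *\<^sub>v vec_of_list z =
    v *\<^sub>v vec_of_list (take s z) + (B * blockV k s B v) *\<^sub>v vec_of_list (drop s z)"
proof (rule eq_vecI)
  fix i
  assume "i < dim_vec (v *\<^sub>v vec_of_list (take s z) + (B * blockV k s B v) *\<^sub>v vec_of_list (drop s z))"
  then have i: "i < n" using v B by simp
  let ?V = "blockV (Suc k) s B v" and ?f = "\<lambda>c. blockV (Suc k) s B v $$ (i, c) * z ! c"
  have "(?V *\<^sub>v vec_of_list z) $ i = sum ?f {0..<s + k * s}"
    using i v z by (simp add: scalar_prod_def vec_of_list_index)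
  also have "\<dots> = sum ?f {0..<s} + sum ?f {s..<s + k * s}"
    by (rule sum.atLeastLessThan_concat[symmetric]) auto
  also have "sum ?f {0..<s} = (v *\<^sub>v vec_of_list (take s z)) $ i"
  proof -
    have "?V $$ (i, c) = (B ^\<^sub>m 0 * v) $$ (i, c)" if "c < s" for c
      using that i v by (simp add: blockV_def del: index_mult_mat pow_mat.simps)
    moreover have "B ^\<^sub>m 0 * v = v" using B v by simp
    ultimately show ?thesis
      using i v z by (auto simp: scalar_prod_def vec_of_list_index intro!: sum.cong)
  qed
  also have "sum ?f {s..<s + k * s} = (\<Sum>c = 0..<k * s. ?V $$ (i, c + s) * z ! (c + s))"
    using sum.shift_bounds_nat_ivl[of ?f 0 s "k * s"] by (simp add: add.commute)
  also have "\<dots> = ((B * blockV k s B v) *\<^sub>v vec_of_list (drop s z)) $ i"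
    using i v z B by (auto simp: blockV_Suc_shift[OF B v] scalar_prod_def vec_of_list_index
        add.commute intro!: sum.cong)
  finally show "(?V *\<^sub>v vec_of_list z) $ i =
      (v *\<^sub>v vec_of_list (take s z) + (B * blockV k s B v) *\<^sub>v vec_of_list (drop s z)) $ i"
    using i v B by simp
qed (use v B in simp)

definition add_mod_list :: "int \<Rightarrow> nat \<Rightarrow> int list \<Rightarrow> int list \<Rightarrow> int list" where
  "add_mod_list p n X Y = map (\<lambda>i. (X ! i + Y ! i) mod p) [0..<n]"

lemma mvp_blockV_Suc:
  assumes B: "B \<in> carrier_mat n n" and v: "v \<in> carrier_mat n s" and z: "length z = Suc k * s"
  shows "mvp p (blockV (Suc k) s B v) z =
    add_mod_list p n (mvp p B (mvp p (blockV k s B v) (drop s z))) (mvp p v (take s z))"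
proof (rule nth_equalityI)
  show "length (mvp p (blockV (Suc k) s B v) z) =
      length (add_mod_list p n (mvp p B (mvp p (blockV k s B v) (drop s z))) (mvp p v (take s z)))"
    using v by (simp add: add_mod_list_def)
  fix i assume "i < length (mvp p (blockV (Suc k) s B v) z)"
  then have i: "i < n" using v by simp
  have BV: "mvp p B (mvp p (blockV k s B v) (drop s z)) = mvp p (B * blockV k s B v) (drop s z)"
    using z by (intro mvp_mvp[OF B blockV_carrier[OF v]]) simp
  have "mvp p (blockV (Suc k) s B v) z ! i =
      ((v *\<^sub>v vec_of_list (take s z)) $ i + ((B * blockV k s B v) *\<^sub>v vec_of_list (drop s z)) $ i) mod p"
    using mult_blockV_Suc[OF B v z] i v B by (simp add: mvp_def list_of_vec_index)
  also have "\<dots> = (mvp p (B * blockV k s B v) (drop s z) ! i + mvp p v (take s z) ! i) mod p"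
    using i v B by (simp add: mvp_def list_of_vec_index mod_add_eq add.commute)
  finally show "mvp p (blockV (Suc k) s B v) z ! i =
      add_mod_list p n (mvp p B (mvp p (blockV k s B v) (drop s z))) (mvp p v (take s z)) ! i"
    using i by (simp add: BV add_mod_list_def)
qed

section \<open>Straight-line programs\<close>

definition exec ::
    "int \<Rightarrow> bbox \<Rightarrow> bbox \<Rightarrow> bbox \<Rightarrow> bbox \<Rightarrow> instr list \<Rightarrow> int list \<Rightarrow> int list" where
  "exec p oB oU oV oH is st = fold (\<lambda>i st. step p oB oU oV oH st i) is st"

lemma exec_Nil[simp]: "exec p oB oU oV oH [] st = st"
  by (simp add: exec_def)

lemma exec_Cons[simp]:
  "exec p oB oU oV oH (i # is) st = exec p oB oU oV oH is (step p oB oU oV oH st i)"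
  by (simp add: exec_def)

lemma exec_append[simp]:
  "exec p oB oU oV oH (is @ js) st = exec p oB oU oV oH js (exec p oB oU oV oH is st)"
  by (simp add: exec_def)

lemma run_conv_exec: "run p oB oU oV oH P w = map (fetch (exec p oB oU oV oH (fst P) w)) (snd P)"
  by (simp add: run_def exec_def)

lemma map_fetch_upt: "a + k \<le> length st \<Longrightarrow> map (fetch st) [a..<a + k] = take k (drop a st)"
  by (intro nth_equalityI) (auto simp: fetch_def)

lemma map_fetch_upt_append:
  "a + k \<le> length st \<Longrightarrow> map (fetch (st @ ys)) [a..<a + k] = take k (drop a st)"
  by (simp add: map_fetch_upt)

lemma map_fetch_upt_last:
  "length st = a \<Longrightarrow> length xs = k \<Longrightarrow> map (fetch (st @ xs)) [a..<a + k] = xs"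
  by (simp add: map_fetch_upt)

lemma exec_map_append_outputs:
  assumes "\<And>j ys. j < T \<Longrightarrow> step p oB oU oV oH (st @ ys) (f j) = st @ ys @ out j"
  shows "exec p oB oU oV oH (map f [0..<T]) st = st @ concat (map out [0..<T])"
  using assms by (induction T) auto

lemma exec_Add_blocks:
  assumes "length st = a + 2 * n" "take n (drop a st) = X" "take n (drop (a + n) st) = Y"
  shows "exec p oB oU oV oH (map (\<lambda>i. Add (a + i) (a + n + i)) [0..<n]) st = st @ add_mod_list p n X Y"
proof -
  have "exec p oB oU oV oH (map (\<lambda>i. Add (a + i) (a + n + i)) [0..<n]) st =
      st @ concat (map (\<lambda>i. [(X ! i + Y ! i) mod p]) [0..<n])"
  proof (rule exec_map_append_outputs)
    fix i ys assume "i < n"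
    then have "fetch (st @ ys) (a + i) = X ! i" "fetch (st @ ys) (a + n + i) = Y ! i"
      using assms by (auto simp: fetch_def nth_append)
    then show "step p oB oU oV oH (st @ ys) (Add (a + i) (a + n + i)) = st @ ys @ [(X ! i + Y ! i) mod p]"
      by simp
  qed
  then show ?thesis by (simp add: add_mod_list_def concat_map_singleton)
qed

definition horner_step_code :: "nat \<Rightarrow> nat \<Rightarrow> nat \<Rightarrow> nat \<Rightarrow> instr list" where
  "horner_step_code n s a b =
     [CallB [a..<a + n], CallV [b..<b + s]] @ map (\<lambda>i. Add (a + n + i) (a + n + n + i)) [0..<n]"

(* Store layout (n = m s): B^j w at n j for j < m, then U w at n m, then z = H^-1 U w at n m + n.
   Horner step t reads the accumulator at n m + 2 n + 3 n t and the block z_(m-2-t) of z, and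
   appends B acc, v z_(m-2-t) and the new accumulator. *)
definition inverse_prog :: "nat \<Rightarrow> nat \<Rightarrow> prog" where
  "inverse_prog m s = (let n = m * s; zb = n * m + n in
    (map (\<lambda>j. CallB [n * j..<n * j + n]) [0..<m - 1]
     @ map (\<lambda>j. CallU [n * j..<n * j + n]) [0..<m]
     @ [CallH [n * m..<n * m + n], CallV [zb + s * (m - 1)..<zb + s * (m - 1) + s]]
     @ concat (map (\<lambda>t. horner_step_code n s (zb + n + 3 * n * t) (zb + s * (m - 2 - t))) [0..<m - 1]),
     [zb + n + 3 * n * (m - 1)..<zb + n + 3 * n * (m - 1) + n]))"

context
  fixes p :: int and m s n :: nat and B u v :: "int mat" and oB oU oV oH :: bbox
  assumes p: "prime p" and m: "0 < m" and n: "n = m * s"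
    and B: "B \<in> carrier_mat n n" and u: "u \<in> carrier_mat s n" and v: "v \<in> carrier_mat n s"
    and U: "nonsingular_modp p (blockU m s B u)"
    and oB: "\<forall>w. length w = n \<and> in_range p w \<longrightarrow> oB w = mvp p B w"
    and oU: "\<forall>w. length w = n \<and> in_range p w \<longrightarrow> oU w = mvp p u w"
    and oV: "\<forall>x. length x = s \<and> in_range p x \<longrightarrow> oV x = mvp p v x"
    and oH: "\<forall>y. length y = n \<and> in_range p y \<longrightarrow>
          length (oH y) = n \<and> in_range p (oH y) \<and> mvp p (blockU m s B u * B * blockV m s B v) (oH y) = y"
begin

lemmas oB_mvp = oB[rule_format, OF conjI]
lemmas oU_mvp = oU[rule_format, OF conjI]
lemmas oV_mvp = oV[rule_format, OF conjI]
lemmas oH_solves = oH[rule_format, OF conjI]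

lemma p_pos: "0 < p"
  using p by (simp add: prime_gt_0_int)

context
  fixes w :: "int list"
  assumes w: "length w = n" "in_range p w"
begin

definition krylov :: "nat \<Rightarrow> int list" where
  "krylov j = mvp p (B ^\<^sub>m j) w"

lemma length_krylov: "length (krylov j) = n"
  using B by (simp add: krylov_def)

lemma in_range_krylov: "in_range p (krylov j)"
  by (simp add: krylov_def in_range_mvp p_pos)

lemma krylov_0: "krylov 0 = w"
  using B w mvp_one_mat[OF w(2)] by (simp add: krylov_def)

lemma oB_krylov: "oB (krylov j) = krylov (Suc j)"
proof -
  have "oB (krylov j) = mvp p B (krylov j)"
    by (rule oB_mvp[OF length_krylov in_range_krylov])
  also have "\<dots> = mvp p (B * B ^\<^sub>m j) w"
    unfolding krylov_def using B w by (intro mvp_mvp) auto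
  finally show ?thesis by (simp add: krylov_def pow_mat_Suc_left[OF B])
qed

lemma oU_krylov: "oU (krylov j) = mvp p (u * B ^\<^sub>m j) w"
proof -
  have "oU (krylov j) = mvp p u (krylov j)"
    by (rule oU_mvp[OF length_krylov in_range_krylov])
  then show ?thesis
    unfolding krylov_def using mvp_mvp[OF u pow_carrier_mat[OF B] w(1)] by simp
qed

lemma exec_CallB_krylov:
  "exec p oB oU oV oH (map (\<lambda>j. CallB [n * j..<n * j + n]) [0..<T]) w = concat (map krylov [0..<Suc T])"
proof (induction T)
  case 0
  then show ?case by (simp add: krylov_0)
next
  case (Suc T)
  have "length (concat (map krylov [0..<Suc T])) = n * Suc T"
    by (rule length_concat_map_upt_const) (simp add: length_krylov)
  then have "map (fetch (concat (map krylov [0..<Suc T]))) [n * T..<n * T + n] = krylov T"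
    by (simp add: map_fetch_upt take_drop_concat_map_upt_const length_krylov)
  then show ?case using Suc by (simp add: oB_krylov)
qed

definition krylov_store :: "int list" where
  "krylov_store = concat (map krylov [0..<m])"

lemma length_krylov_store: "length krylov_store = n * m"
  unfolding krylov_store_def by (rule length_concat_map_upt_const) (simp add: length_krylov)

lemma exec_CallU_krylov:
  "exec p oB oU oV oH (map (\<lambda>j. CallU [n * j..<n * j + n]) [0..<m]) krylov_store =
    krylov_store @ mvp p (blockU m s B u) w"
proof -
  have "exec p oB oU oV oH (map (\<lambda>j. CallU [n * j..<n * j + n]) [0..<m]) krylov_store =
      krylov_store @ concat (map (\<lambda>j. oU (krylov j)) [0..<m])"
  proof (rule exec_map_append_outputs)
    fix j ys assume j: "j < m"
    then have "n * j + n \<le> length krylov_store"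
      using length_krylov_store mult_le_mono2[of "Suc j" m n] by simp
    then have "map (fetch (krylov_store @ ys)) [n * j..<n * j + n] = krylov j"
      using j by (simp add: map_fetch_upt_append krylov_store_def take_drop_concat_map_upt_const
          length_krylov)
    then show "step p oB oU oV oH (krylov_store @ ys) (CallU [n * j..<n * j + n]) =
        krylov_store @ ys @ oU (krylov j)"
      by simp
  qed
  then show ?thesis
    by (simp add: oU_krylov mvp_blockU[OF B u])
qed

definition z :: "int list" where
  "z = oH (mvp p (blockU m s B u) w)"

lemma z: "length z = n" "in_range p z"
    "mvp p (blockU m s B u * B * blockV m s B v) z = mvp p (blockU m s B u) w"
  using oH_solves[of "mvp p (blockU m s B u) w"] n by (auto simp: z_def in_range_mvp p_pos)

definition zblock :: "nat \<Rightarrow> int list" where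
  "zblock j = take s (drop (s * j) z)"

lemma oV_zblock:
  assumes "j < m"
  shows "oV (zblock j) = mvp p v (zblock j)"
proof (rule oV_mvp)
  have "s * j + s \<le> n" using assms mult_le_mono2[of "Suc j" m s] n by (simp add: mult.commute)
  then show "length (zblock j) = s" using z(1) by (simp add: zblock_def)
  show "in_range p (zblock j)"
    using z(2) by (auto simp: zblock_def in_range_def dest: in_set_takeD in_set_dropD)
qed

definition acc :: "nat \<Rightarrow> int list" where
  "acc t = mvp p (blockV (Suc t) s B v) (drop (s * (m - 1 - t)) z)"

lemma length_acc: "length (acc t) = n"
  using v by (simp add: acc_def)

lemma in_range_acc: "in_range p (acc t)"
  by (simp add: acc_def in_range_mvp p_pos)

lemma acc_0: "oV (zblock (m - 1)) = acc 0"
proof -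
  have "length (drop (s * (m - 1)) z) = s"
    using z(1) n m by (cases m) auto
  then have "zblock (m - 1) = drop (s * (m - 1)) z" by (simp add: zblock_def)
  then show ?thesis
    using oV_zblock[of "m - 1"] m blockV_1[OF B v] by (simp add: acc_def)
qed

lemma acc_Suc:
  assumes "Suc t < m"
  shows "add_mod_list p n (oB (acc t)) (oV (zblock (m - 2 - t))) = acc (Suc t)"
proof -
  obtain k where k: "m = Suc (Suc t + k)" using less_imp_Suc_add[OF assms] by blast
  let ?z = "drop (s * (m - 2 - t)) z"
  have "length ?z = Suc (Suc t) * s"
    using z(1) n k by (simp add: algebra_simps)
  moreover have "drop s ?z = drop (s * (m - 1 - t)) z"
    using k by (simp add: algebra_simps)
  moreover have "take s ?z = zblock (m - 2 - t)" by (simp add: zblock_def)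
  ultimately show ?thesis
    using assms oB_mvp[OF length_acc in_range_acc] mvp_blockV_Suc[OF B v, of ?z "Suc t" p]
    by (simp add: oV_zblock acc_def)
qed

definition z_store :: "int list" where
  "z_store = krylov_store @ mvp p (blockU m s B u) w @ z"

lemma length_z_store: "length z_store = n * m + n + n"
  using B n by (simp add: z_store_def length_krylov_store z(1))

lemma take_drop_z_store: "take s (drop (n * m + n + s * j) z_store) = zblock j"
  using B n by (simp add: z_store_def length_krylov_store zblock_def)

lemma length_oB_acc: "length (oB (acc t)) = n"
  using oB_mvp[OF length_acc in_range_acc] B by simp

lemma length_oV_zblock: "j < m \<Longrightarrow> length (oV (zblock j)) = n"
  using oV_zblock v by simp

lemma exec_horner_step:
  assumes t: "Suc t < m" and mid: "length mid = 3 * n * t"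
  shows "exec p oB oU oV oH (horner_step_code n s (n * m + n + n + 3 * n * t) (n * m + n + s * (m - 2 - t)))
      (z_store @ mid @ acc t) = z_store @ (mid @ acc t @ oB (acc t) @ oV (zblock (m - 2 - t))) @ acc (Suc t)"
proof -
  let ?a = "n * m + n + n + 3 * n * t" and ?j = "m - 2 - t"
  let ?st = "z_store @ mid @ acc t"
  have "length ?st = ?a + n" using mid by (simp add: length_z_store length_acc)
  have read_acc: "map (fetch ?st) [?a..<?a + n] = acc t"
    using map_fetch_upt_last[of "z_store @ mid" ?a "acc t" n] mid
    by (simp add: length_z_store length_acc)
  have "?j < m" using t by simp
  then have "s * ?j + s \<le> n" using mult_le_mono2[of "Suc ?j" m s] n by (simp add: mult.commute)
  then have "n * m + n + s * ?j + s \<le> length z_store" by (simp add: length_z_store)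
  then have read_z: "map (fetch (z_store @ mid @ acc t @ oB (acc t)))
      [n * m + n + s * ?j..<n * m + n + s * ?j + s] = zblock ?j"
    by (simp add: map_fetch_upt_append take_drop_z_store)
  have "exec p oB oU oV oH (horner_step_code n s ?a (n * m + n + s * ?j)) ?st =
      exec p oB oU oV oH (map (\<lambda>i. Add (?a + n + i) (?a + n + n + i)) [0..<n])
        (?st @ oB (acc t) @ oV (zblock ?j))"
    using read_acc read_z by (simp add: horner_step_code_def)
  also have "\<dots> = ?st @ oB (acc t) @ oV (zblock ?j) @ add_mod_list p n (oB (acc t)) (oV (zblock ?j))"
    using \<open>length ?st = ?a + n\<close> length_oB_acc length_oV_zblock[OF \<open>?j < m\<close>]
    by (subst exec_Add_blocks) simp_all
  also have "add_mod_list p n (oB (acc t)) (oV (zblock ?j)) = acc (Suc t)"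
    using t by (rule acc_Suc)
  finally show ?thesis by simp
qed

lemma exec_horner:
  assumes "T \<le> m - 1"
  shows "\<exists>mid. exec p oB oU oV oH (concat (map (\<lambda>t. horner_step_code n s (n * m + n + n + 3 * n * t)
      (n * m + n + s * (m - 2 - t))) [0..<T])) (z_store @ acc 0) = z_store @ mid @ acc T
    \<and> length mid = 3 * n * T"
  using assms
proof (induction T)
  case 0
  then show ?case by simp
next
  case (Suc T)
  then obtain mid where mid: "exec p oB oU oV oH (concat (map (\<lambda>t. horner_step_code n s
      (n * m + n + n + 3 * n * t) (n * m + n + s * (m - 2 - t))) [0..<T])) (z_store @ acc 0) =
      z_store @ mid @ acc T" "length mid = 3 * n * T"
    by auto
  have "Suc T < m" using Suc.prems m by simp
  then show ?case
    using mid exec_horner_step[OF _ mid(2)] length_oB_acc length_oV_zblock[of "m - 2 - T"]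
    by (intro exI[of _ "mid @ acc T @ oB (acc T) @ oV (zblock (m - 2 - T))"]) (simp add: length_acc)
qed

lemma exec_inverse_prog:
  "\<exists>mid. exec p oB oU oV oH (fst (inverse_prog m s)) w = z_store @ mid @ acc (m - 1)
    \<and> length mid = 3 * n * (m - 1)"
proof -
  have "map (fetch (krylov_store @ mvp p (blockU m s B u) w)) [n * m..<n * m + n] = mvp p (blockU m s B u) w"
    using n by (intro map_fetch_upt_last) (simp_all add: length_krylov_store)
  then have CallH: "step p oB oU oV oH (krylov_store @ mvp p (blockU m s B u) w) (CallH [n * m..<n * m + n])
      = z_store"
    by (simp add: z_store_def z_def)
  have "s * (m - 1) + s = n" using m n by (cases m) simp_all
  then have "n * m + n + s * (m - 1) + s \<le> length z_store" by (simp add: length_z_store)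
  then have CallV: "step p oB oU oV oH z_store (CallV [n * m + n + s * (m - 1)..<n * m + n + s * (m - 1) + s])
      = z_store @ acc 0"
    using acc_0 by (simp add: map_fetch_upt take_drop_z_store)
  have "exec p oB oU oV oH (map (\<lambda>j. CallB [n * j..<n * j + n]) [0..<m - 1]) w = krylov_store"
    using m by (simp add: exec_CallB_krylov krylov_store_def)
  then have "exec p oB oU oV oH (fst (inverse_prog m s)) w =
      exec p oB oU oV oH (concat (map (\<lambda>t. horner_step_code n s (n * m + n + n + 3 * n * t)
        (n * m + n + s * (m - 2 - t))) [0..<m - 1])) (z_store @ acc 0)"
    using CallH CallV unfolding inverse_prog_def Let_def n[symmetric]
    by (simp add: exec_CallU_krylov)
  then show ?thesis using exec_horner[of "m - 1"] by simp
qed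

lemma run_inverse_prog: "run p oB oU oV oH (inverse_prog m s) w = mvp p (blockV m s B v) z"
proof -
  obtain mid where mid: "exec p oB oU oV oH (fst (inverse_prog m s)) w = z_store @ mid @ acc (m - 1)"
      "length mid = 3 * n * (m - 1)"
    using exec_inverse_prog by blast
  have "snd (inverse_prog m s) = [n * m + n + n + 3 * n * (m - 1)..<n * m + n + n + 3 * n * (m - 1) + n]"
    unfolding inverse_prog_def Let_def n[symmetric] by simp
  then have "run p oB oU oV oH (inverse_prog m s) w = acc (m - 1)"
    using mid map_fetch_upt_last[of "z_store @ mid" _ "acc (m - 1)" n]
    by (simp add: run_conv_exec length_z_store length_acc)
  then show ?thesis using m by (simp add: acc_def)
qed

lemma inverse_prog_correct:
  "length (run p oB oU oV oH (inverse_prog m s) w) = n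
   \<and> in_range p (run p oB oU oV oH (inverse_prog m s) w)
   \<and> mvp p B (run p oB oU oV oH (inverse_prog m s) w) = w"
proof -
  have "blockU m s B u \<in> carrier_mat n n" "blockV m s B v \<in> carrier_mat n n"
    using blockU_carrier[OF u] blockV_carrier[OF v] n by simp_all
  then have "mvp p B (mvp p (blockV m s B v) z) = w"
    using mvp_solution_of_UBV[OF p _ U B _ z(1) w z(3)] by blast
  then show ?thesis
    using v by (simp add: run_inverse_prog in_range_mvp p_pos)
qed

end

lemma inverse_prog_spec:
  "\<forall>w. length w = n \<and> in_range p w \<longrightarrow>
    (let x = run p oB oU oV oH (inverse_prog m s) w in length x = n \<and> in_range p x \<and> mvp p B x = w)"
  using inverse_prog_correct by (simp add: Let_def)

end

section \<open>Cost\<close>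

lemma sum_list_map_concat: "sum_list (map f (concat xss)) = sum_list (map (\<lambda>xs. sum_list (map f xs)) xss)"
  by (induction xss) simp_all

lemma cost_horner_step_code:
  "sum_list (map (icost mu cU cV cH) (horner_step_code n s a b)) = mu + cV + real n"
  unfolding horner_step_code_def map_append sum_list_append map_map o_def icost.simps
  by (simp add: sum_list_triv)

lemma cost_inverse_prog:
  assumes "0 < m"
  shows "cost mu cU cV cH (inverse_prog m s) =
    2 * real (m - 1) * mu + real m * cU + real m * cV + cH + real (m - 1) * real (m * s)"
proof -
  have "cost mu cU cV cH (inverse_prog m s) =
      real (m - 1) * mu + real m * cU + (cH + cV) + real (m - 1) * (mu + cV + real (m * s))"
    unfolding cost_def inverse_prog_def Let_def fst_conv map_append sum_list_append
      sum_list_map_concat map_map o_def cost_horner_step_code icost.simps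
    by (simp add: sum_list_triv)
  also have "\<dots> = 2 * real (m - 1) * mu + real m * cU + real m * cV + cH + real (m - 1) * real (m * s)"
    using assms by (simp add: of_nat_diff algebra_simps)
  finally show ?thesis .
qed

lemma otil_nonneg: "0 \<le> otil k x"
  by (simp add: otil_def)

lemma otil_mono: "a \<le> b \<Longrightarrow> otil k a \<le> otil k b"
  unfolding otil_def by (intro mult_mono power_mono) auto

lemma le_otil: "real x \<le> otil k x"
proof -
  have "1 \<le> log 2 (real x + 2) ^ k" by (intro one_le_power) simp
  then show ?thesis unfolding otil_def using mult_left_mono[of 1 _ "real x"] by simp
qed

lemma mult_otil_le: "real a * otil k b \<le> otil k (a * b)"
proof (cases "a = 0")
  case False
  then have "b \<le> a * b" by (cases a) simp_all
  then have "real b \<le> real (a * b)" by (rule of_nat_mono)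
  then have "log 2 (real b + 2) ^ k \<le> log 2 (real (a * b) + 2) ^ k"
    by (intro power_mono log_mono) simp_all
  then have "real a * real b * log 2 (real b + 2) ^ k \<le> real a * real b * log 2 (real (a * b) + 2) ^ k"
    by (rule mult_left_mono) simp
  then show ?thesis
    unfolding otil_def by (simp add: mult.assoc)
qed (simp add: otil_nonneg)

lemma cost_inverse_prog_le:
  assumes m: "0 < m" and s: "0 < s"
    and cU: "cU \<le> c * (1 + otil k (m * s))" and cV: "cV \<le> c * (1 + otil k (m * s))"
    and cH: "cH \<le> c * (1 + otil k (m * s * s))"
  shows "cost mu cU cV cH (inverse_prog m s)
    \<le> 2 * real (m - 1) * mu + (5 * max c 0 + 1) * (1 + otil k (m * s * (m + s)))"
proof -
  define N where "N = m * s * (m + s)"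
  define c' where "c' = max c 0"
  have c': "0 \<le> c'" "c * (1 + otil k x) \<le> c' * (1 + otil k x)" for x
    using otil_nonneg[of k x] by (auto simp: c'_def intro: mult_right_mono)
  have "m * 1 * 1 \<le> N" unfolding N_def using s by (intro mult_le_mono) auto
  then have m_N: "real m \<le> otil k N"
    using le_otil[of N k] by linarith
  have "m * (m * s) \<le> N" unfolding N_def by (simp add: algebra_simps)
  then have "real m * otil k (m * s) \<le> otil k N"
    using mult_otil_le[of m k "m * s"] otil_mono[of "m * (m * s)" N k] by linarith
  then have "c' * (real m + real m * otil k (m * s)) \<le> c' * (2 * otil k N)"
    using m_N c'(1) by (intro mult_left_mono) simp_all
  then have block_cost: "real m * x \<le> c' * (2 * otil k N)" if "x \<le> c * (1 + otil k (m * s))" for x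
    using mult_left_mono[OF order_trans[OF that c'(2)], of "real m"] by (simp add: algebra_simps)
  have "m * s * s \<le> N" unfolding N_def by (intro mult_le_mono2) simp
  then have "c' * (1 + otil k (m * s * s)) \<le> c' * (1 + otil k N)"
    using c'(1) by (intro mult_left_mono) (simp_all add: otil_mono)
  then have H_cost: "cH \<le> c' * (1 + otil k N)"
    using cH c'(2) by (meson order_trans)
  have "(m - 1) * (m * s) \<le> (m + s) * (m * s)" by (intro mult_le_mono1) simp
  then have "(m - 1) * (m * s) \<le> N" by (simp add: N_def mult.commute)
  then have "real (m - 1) * real (m * s) \<le> real N" by (metis of_nat_mono of_nat_mult)
  then have "real (m - 1) * real (m * s) \<le> otil k N" using le_otil[of N k] by linarith
  then have "cost mu cU cV cH (inverse_prog m s) \<le> 2 * real (m - 1) * mu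
      + (c' * (2 * otil k N) + c' * (2 * otil k N) + c' * (1 + otil k N) + otil k N)"
    using block_cost[OF cU] block_cost[OF cV] H_cost by (simp add: cost_inverse_prog[OF m])
  also have "c' * (2 * otil k N) + c' * (2 * otil k N) + c' * (1 + otil k N) + otil k N
      = (5 * c' + 1) * otil k N + c'"
    by (simp add: algebra_simps)
  also have "\<dots> \<le> (5 * c' + 1) * (1 + otil k N)"
    using c'(1) by (simp add: distrib_left)
  finally show ?thesis unfolding N_def c'_def by simp
qed

theorem mainTheorem4:
  fixes c :: real and k :: nat
  shows "\<exists>C :: real. \<exists>K :: nat. \<forall>(p::int) (m::nat) (s::nat). prime p \<longrightarrow>
    (\<exists>P :: prog. \<forall>(B::int mat) (u::int mat) (v::int mat) (oB::bbox) (oU::bbox) (oV::bbox) (oH::bbox)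
        (mu::real) (cU::real) (cV::real) (cH::real).
      let n = m * s; U = blockU m s B u; V = blockV m s B v; H = U * B * V in
      B \<in> carrier_mat n n \<longrightarrow> u \<in> carrier_mat s n \<longrightarrow> v \<in> carrier_mat n s \<longrightarrow>
      nonsingular_modp p B \<longrightarrow> nonsingular_modp p U \<longrightarrow> nonsingular_modp p V \<longrightarrow>
      (\<forall>w. length w = n \<and> in_range p w \<longrightarrow> oB w = mvp p B w) \<longrightarrow>
      (\<forall>w. length w = n \<and> in_range p w \<longrightarrow> oU w = mvp p u w) \<longrightarrow>
      (\<forall>x. length x = s \<and> in_range p x \<longrightarrow> oV x = mvp p v x) \<longrightarrow>
      (\<forall>y. length y = n \<and> in_range p y \<longrightarrow>
          length (oH y) = n \<and> in_range p (oH y) \<and> mvp p H (oH y) = y) \<longrightarrow>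
      0 \<le> mu \<longrightarrow> 0 \<le> cU \<longrightarrow> 0 \<le> cV \<longrightarrow> 0 \<le> cH \<longrightarrow>
      cU \<le> c * (1 + otil k n) \<longrightarrow> cV \<le> c * (1 + otil k n) \<longrightarrow>
      cH \<le> c * (1 + otil k (n * s)) \<longrightarrow>
      cost mu cU cV cH P \<le> 2 * real (m - 1) * mu + C * (1 + otil K (n * (m + s))) \<and>
      (\<forall>w. length w = n \<and> in_range p w \<longrightarrow>
         (let x = run p oB oU oV oH P w in
            length x = n \<and> in_range p x \<and> mvp p B x = w)))"
proof (intro exI[of _ "5 * max c 0 + 1"] exI[of _ k] allI impI, goal_cases)
  case (1 p m s)
  show ?case
  proof (cases "0 < m \<and> 0 < s")
    case True
    then have m: "0 < m" and s: "0 < s" by auto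
    show ?thesis
      unfolding Let_def
      by (intro exI[of _ "inverse_prog m s"] allI impI, rule conjI,
          (rule cost_inverse_prog_le[OF m s]; assumption),
          (rule inverse_prog_spec[OF \<open>prime p\<close> m refl, unfolded Let_def]; assumption))
  next
    case False
    then have ms: "m * s = 0" by simp
    have "0 \<le> (5 * max c 0 + 1) * (1 + otil k (m * s * (m + s)))"
      using otil_nonneg[of k] by simp
    moreover have "mvp p B [] = []" if "B \<in> carrier_mat 0 0" for B :: "int mat"
      using that by (metis carrier_matD(1) length_0_conv length_mvp)
    ultimately show ?thesis
      unfolding Let_def ms
      by (intro exI[of _ "([], [])"] allI impI conjI) (simp_all add: cost_def run_def in_range_def)
  qed
qed

end
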